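(* There exists a constant $\hat C_0>0$, depending only on $m,\alpha,\beta$, such that the following holds. Let $T>0$, let $(\hat u,\hat v)$ be a smooth solution of the NLDE on $\mathbb{R}\times[0,T]$ with $\mathcal{M}_0=\max_{\mathbb{R}\times[0,T]}(|\hat u|+|\hat v|+1)<\infty$, let $\tau>0$ and let $(u^{(\tau)},v^{(\tau)})$ be a time-splitting solution with mesh $\tau$. Then for all $j\in\mathbb{Z}$, all integers $n\ge0$ with $(n+1)\tau\le T$ and all $s\in[0,\tau)$, $$|\hat u(j\tau+s,n\tau+s)-u^{(\tau)}(j\tau+s,n\tau+s)|^2+|\hat v((j+2)\tau-s,n\tau+s)-v^{(\tau)}((j+2)\tau-s,n\tau+s)|^2$$ $$\le e^{2\tau}\Big(|\hat u(j\tau,n\tau)-u_j^n|^2+|\hat v((j+2)\tau,n\tau)-v_{j+2}^n|^2+\hat C_0\mathcal{M}_0^6\tau\Big).$$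
   Context: Fix constants $m\ge 0$ and $\alpha,\beta\in\mathbb{R}$. The NLDE for $(u,v):\mathbb{R}\times[0,T]\to\mathbb{C}^2$ is $u_t+u_x=imv+i\alpha u|v|^2+2i\beta(\bar u v+u\bar v)v$, $v_t-v_x=imu+i\alpha v|u|^2+2i\beta(\bar u v+u\bar v)u$. Let (N) denote the ODE system on $\mathbb{C}^2$: $\frac{du}{ds}=imv+i\alpha u|v|^2+2i\beta(\bar u v+u\bar v)v$, $\frac{dv}{ds}=imu+i\alpha v|u|^2+2i\beta(\bar u v+u\bar v)u$. Time-splitting scheme with mesh $\tau>0$: given $(u_j^0,v_j^0)_{j\in\mathbb{Z}}\subset\mathbb{C}^2$ with $\sum_j(|u_j^0|^2+|v_j^0|^2)<\infty$, set $(u^{(\tau)},v^{(\tau)})(x,0)=(u_j^0,v_j^0)$ for $x\in[j\tau,(j+1)\tau)$. Inductively, once $(u^{(\tau)},v^{(\tau)})(\cdot,n\tau)$ is defined, set for $t\in[n\tau,(n+1)\tau)$: $u^{(\tau)}(x,t)=u^{(\tau)}(x-(t-n\tau),n\tau)$, $v^{(\tau)}(x,t)=v^{(\tau)}(x+(t-n\tau),n\tau)$; let $(u^{(\tau)},v^{(\tau)})(x,(n+1)\tau-)$ be the left limit in $t$; and for each $x$ define $(u^{(\tau)},v^{(\tau)})(x,(n+1)\tau)$ as the value at $s=\tau$ of the solution of (N) with value $(u^{(\tau)},v^{(\tau)})(x,(n+1)\tau-)$ at $s=0$ (this is globally well defined). Notation: $(u_j^n,v_j^n)=(u^{(\tau)},v^{(\tau)})(j\tau,n\tau)$.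 *)

theory Defs
  imports "HOL-Analysis.Analysis"
begin

definition nlde_F :: "real \<Rightarrow> real \<Rightarrow> real \<Rightarrow> complex \<times> complex \<Rightarrow> complex \<times> complex" where
  "nlde_F m \<alpha> \<beta> z = (case z of (u, v) \<Rightarrow>
     (\<i> * complex_of_real m * v + \<i> * complex_of_real \<alpha> * u * complex_of_real ((cmod v)\<^sup>2)
        + 2 * \<i> * complex_of_real \<beta> * (cnj u * v + u * cnj v) * v,
      \<i> * complex_of_real m * u + \<i> * complex_of_real \<alpha> * v * complex_of_real ((cmod u)\<^sup>2)
        + 2 * \<i> * complex_of_real \<beta> * (cnj u * v + u * cnj v) * u))"

definition N_flow :: "real \<Rightarrow> real \<Rightarrow> real \<Rightarrow> real \<Rightarrow> complex \<times> complex \<Rightarrow> complex \<times> complex" where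
  "N_flow m \<alpha> \<beta> \<tau> z = (THE w. \<exists>y. y 0 = z \<and>
      (\<forall>s\<in>{0..\<tau>}. (y has_vector_derivative nlde_F m \<alpha> \<beta> (y s)) (at s within {0..\<tau>})) \<and>
      y \<tau> = w)"

text \<open>Classical (continuously differentiable) solution of the NLDE on R x [0,T];
  functions are written u x t.\<close>
definition NLDE_solution :: "real \<Rightarrow> real \<Rightarrow> real \<Rightarrow> real \<Rightarrow>
    (real \<Rightarrow> real \<Rightarrow> complex) \<Rightarrow> (real \<Rightarrow> real \<Rightarrow> complex) \<Rightarrow> bool" where
  "NLDE_solution m \<alpha> \<beta> T u v \<longleftrightarrow>
    (\<exists>Du Dv. (\<forall>p\<in>UNIV \<times> {0..T}.
        ((\<lambda>q. u (fst q) (snd q)) has_derivative Du p) (at p within UNIV \<times> {0..T}) \<and>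
        ((\<lambda>q. v (fst q) (snd q)) has_derivative Dv p) (at p within UNIV \<times> {0..T}) \<and>
        Du p (0, 1) + Du p (1, 0) = fst (nlde_F m \<alpha> \<beta> (u (fst p) (snd p), v (fst p) (snd p))) \<and>
        Dv p (0, 1) - Dv p (1, 0) = snd (nlde_F m \<alpha> \<beta> (u (fst p) (snd p), v (fst p) (snd p)))) \<and>
      continuous_on (UNIV \<times> {0..T}) (\<lambda>p. Du p (1, 0)) \<and>
      continuous_on (UNIV \<times> {0..T}) (\<lambda>p. Du p (0, 1)) \<and>
      continuous_on (UNIV \<times> {0..T}) (\<lambda>p. Dv p (1, 0)) \<and>
      continuous_on (UNIV \<times> {0..T}) (\<lambda>p. Dv p (0, 1)))"

definition nlde_M0 :: "real \<Rightarrow> (real \<Rightarrow> real \<Rightarrow> complex) \<Rightarrow> (real \<Rightarrow> real \<Rightarrow> complex) \<Rightarrow> real" where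
  "nlde_M0 T u v = (SUP p\<in>UNIV \<times> {0..T}. cmod (u (fst p) (snd p)) + cmod (v (fst p) (snd p)) + 1)"

definition time_splitting_solution :: "real \<Rightarrow> real \<Rightarrow> real \<Rightarrow> real \<Rightarrow>
    (int \<Rightarrow> complex) \<Rightarrow> (int \<Rightarrow> complex) \<Rightarrow>
    (real \<Rightarrow> real \<Rightarrow> complex) \<Rightarrow> (real \<Rightarrow> real \<Rightarrow> complex) \<Rightarrow> bool" where
  "time_splitting_solution m \<alpha> \<beta> \<tau> u0 v0 ut vt \<longleftrightarrow>
    (\<forall>x. ut x 0 = u0 \<lfloor>x / \<tau>\<rfloor> \<and> vt x 0 = v0 \<lfloor>x / \<tau>\<rfloor>) \<and>
    (\<forall>n::nat. \<forall>x t. real n * \<tau> \<le> t \<and> t < (real n + 1) * \<tau> \<longrightarrow>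
        ut x t = ut (x - (t - real n * \<tau>)) (real n * \<tau>) \<and>
        vt x t = vt (x + (t - real n * \<tau>)) (real n * \<tau>)) \<and>
    (\<forall>n::nat. \<forall>x. (ut x ((real n + 1) * \<tau>), vt x ((real n + 1) * \<tau>)) =
        N_flow m \<alpha> \<beta> \<tau> (Lim (at_left ((real n + 1) * \<tau>)) (\<lambda>t. ut x t),
                          Lim (at_left ((real n + 1) * \<tau>)) (\<lambda>t. vt x t)))"

end

theory Submission
  imports Defs
begin

(* Within one time step the splitting solution is transported exactly along the characteristics
   x - t = const (for u) and x + t = const (for v), whereas along the same lines the exact solution
   changes only through the nonlinearity, whose size is at most L M_0^3 with
   L = |m| + |alpha| + 4|beta|.  So after time s in [0, tau) each error component has grown by at
   most s L M_0^3, and (a + tau k)^2 <= e^(2 tau) (a^2 + tau k^2) gives the estimate with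
   C_0 = 2 L^2 + 1. *)

lemma norm_diff_along_segment_le:
  fixes G :: "'a::real_normed_vector \<Rightarrow> 'b::real_normed_vector"
  assumes deriv: "\<And>q. q \<in> S \<Longrightarrow> (G has_derivative D q) (at q within S)"
    and segment: "\<And>r. r \<in> {0..s} \<Longrightarrow> p + r *\<^sub>R d \<in> S"
    and bound: "\<And>r. r \<in> {0..s} \<Longrightarrow> norm (D (p + r *\<^sub>R d) d) \<le> K"
    and "0 \<le> s"
  shows "norm (G (p + s *\<^sub>R d) - G p) \<le> K * s"
proof -
  define \<gamma> where "\<gamma> r = p + r *\<^sub>R d" for r :: real
  have "norm (D p d) \<le> K"
    using bound[of 0] \<open>0 \<le> s\<close> by simp
  then have "K \<ge> 0"
    using norm_ge_zero[of "D p d"] by linarith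
  have image: "\<gamma> ` {0..s} \<subseteq> S"
    using segment unfolding \<gamma>_def by auto
  have line: "(\<gamma> has_derivative (\<lambda>h. h *\<^sub>R d)) (at r within {0..s})" for r
    unfolding \<gamma>_def by (auto intro!: derivative_eq_intros)
  have comp: "((\<lambda>r. G (\<gamma> r)) has_derivative (\<lambda>h. D (\<gamma> r) (h *\<^sub>R d))) (at r within {0..s})"
    if "r \<in> {0..s}" for r
    using has_derivative_in_compose2[OF deriv image that line] .
  have "onorm (\<lambda>h. D (\<gamma> r) (h *\<^sub>R d)) \<le> K" if "r \<in> {0..s}" for r
  proof (rule onorm_bound[OF \<open>K \<ge> 0\<close>])
    fix h :: real
    have "linear (D (\<gamma> r))"
      using deriv segment[OF that] has_derivative_linear unfolding \<gamma>_def by blast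
    then have "norm (D (\<gamma> r) (h *\<^sub>R d)) = \<bar>h\<bar> * norm (D (\<gamma> r) d)"
      by (simp add: linear_scale)
    also have "\<dots> \<le> K * norm h"
      using mult_left_mono[OF bound[OF that] abs_ge_zero[of h]] unfolding \<gamma>_def real_norm_def
      by (metis mult.commute)
    finally show "norm (D (\<gamma> r) (h *\<^sub>R d)) \<le> K * norm h" .
  qed
  then have "norm (G (\<gamma> s) - G (\<gamma> 0)) \<le> K * norm (s - 0)"
    using comp \<open>0 \<le> s\<close> by (intro differentiable_bound[of "{0..s}"]) auto
  then show ?thesis
    using \<open>0 \<le> s\<close> unfolding \<gamma>_def by simp
qed

lemma power2_add_mult_le_exp:
  fixes a k \<tau> :: real
  assumes "0 \<le> \<tau>"
  shows "(a + \<tau> * k)\<^sup>2 \<le> exp (2 * \<tau>) * (a\<^sup>2 + \<tau> * k\<^sup>2)"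
proof -
  have "(a + \<tau> * k)\<^sup>2 \<le> (1 + 2 * \<tau>) * (a\<^sup>2 + \<tau> * k\<^sup>2)"
  proof -
    have "0 \<le> \<tau> * (2 * a - k)\<^sup>2 + \<tau> * k\<^sup>2 + 2 * \<tau>\<^sup>2 * k\<^sup>2"
      using assms by simp
    then show ?thesis
      by (simp add: power2_eq_square algebra_simps)
  qed
  also have "\<dots> \<le> exp (2 * \<tau>) * (a\<^sup>2 + \<tau> * k\<^sup>2)"
    using assms exp_ge_add_one_self[of "2 * \<tau>"] by (intro mult_right_mono) auto
  finally show ?thesis .
qed

lemma norm_diff_power2_le_exp:
  fixes a a' b :: "'a::real_normed_vector"
  assumes "norm (a' - a) \<le> s * K" "0 \<le> s" "s \<le> \<tau>" "0 \<le> K"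
  shows "(norm (a' - b))\<^sup>2 \<le> exp (2 * \<tau>) * ((norm (a - b))\<^sup>2 + \<tau> * K\<^sup>2)"
proof -
  have "norm (a' - b) \<le> norm (a' - a) + norm (a - b)"
    using norm_triangle_ineq[of "a' - a" "a - b"] by simp
  also have "\<dots> \<le> norm (a - b) + \<tau> * K"
    using assms mult_right_mono[of s \<tau> K] by linarith
  finally have "(norm (a' - b))\<^sup>2 \<le> (norm (a - b) + \<tau> * K)\<^sup>2"
    by (simp add: power_mono)
  also have "\<dots> \<le> exp (2 * \<tau>) * ((norm (a - b))\<^sup>2 + \<tau> * K\<^sup>2)"
    using assms by (intro power2_add_mult_le_exp) linarith
  finally show ?thesis .
qed

lemma nlde_F_swap: "snd (nlde_F m \<alpha> \<beta> (u, v)) = fst (nlde_F m \<alpha> \<beta> (v, u))"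
  by (simp add: nlde_F_def algebra_simps)

lemma norm_nlde_F_fst_le:
  assumes "cmod u + cmod v + 1 \<le> M"
  shows "cmod (fst (nlde_F m \<alpha> \<beta> (u, v))) \<le> (\<bar>m\<bar> + \<bar>\<alpha>\<bar> + 4 * \<bar>\<beta>\<bar>) * M ^ 3"
proof -
  have "1 \<le> M" and u: "cmod u \<le> M" and v: "cmod v \<le> M"
    using assms norm_ge_zero[of u] norm_ge_zero[of v] by linarith+
  have "cmod (2 * \<i> * complex_of_real \<beta> * (cnj u * v + u * cnj v) * v)
      = 2 * \<bar>\<beta>\<bar> * cmod (cnj u * v + u * cnj v) * cmod v"
    by (simp add: norm_mult)
  also have "\<dots> \<le> 2 * \<bar>\<beta>\<bar> * (2 * cmod u * cmod v) * cmod v"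
    using norm_triangle_ineq[of "cnj u * v" "u * cnj v"]
    by (intro mult_right_mono mult_left_mono) (auto simp: norm_mult)
  finally have "cmod (fst (nlde_F m \<alpha> \<beta> (u, v)))
      \<le> \<bar>m\<bar> * cmod v + \<bar>\<alpha>\<bar> * (cmod u * cmod v * cmod v) + 4 * \<bar>\<beta>\<bar> * (cmod u * cmod v * cmod v)"
    unfolding nlde_F_def
    by (auto simp: norm_mult norm_power power2_eq_square intro!: norm_triangle_le add_mono)
  also have "\<dots> \<le> \<bar>m\<bar> * M ^ 3 + \<bar>\<alpha>\<bar> * M ^ 3 + 4 * \<bar>\<beta>\<bar> * M ^ 3"
  proof -
    have "cmod v \<le> M ^ 3"
      using v \<open>1 \<le> M\<close> power_increasing[of 1 3 M] by simp
    moreover have "cmod u * cmod v * cmod v \<le> M ^ 3"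
      unfolding power3_eq_cube using u v \<open>1 \<le> M\<close> by (intro mult_mono) auto
    ultimately show ?thesis
      by (intro add_mono mult_left_mono) auto
  qed
  finally show ?thesis
    by (simp add: algebra_simps)
qed

lemma nlde_M0_upper:
  assumes "bdd_above ((\<lambda>p. cmod (uh (fst p) (snd p)) + cmod (vh (fst p) (snd p)) + 1) ` (UNIV \<times> {0..T}))"
    and "0 \<le> t" "t \<le> T"
  shows "cmod (uh x t) + cmod (vh x t) + 1 \<le> nlde_M0 T uh vh"
  unfolding nlde_M0_def using cSUP_upper[OF _ assms(1), of "(x, t)"] assms(2,3) by simp

lemma NLDE_solution_along_characteristics:
  assumes sol: "NLDE_solution m \<alpha> \<beta> T uh vh"
    and bdd: "bdd_above ((\<lambda>p. cmod (uh (fst p) (snd p)) + cmod (vh (fst p) (snd p)) + 1) ` (UNIV \<times> {0..T}))"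
    and "0 \<le> t" "0 \<le> s" "t + s \<le> T"
  defines "K \<equiv> (\<bar>m\<bar> + \<bar>\<alpha>\<bar> + 4 * \<bar>\<beta>\<bar>) * nlde_M0 T uh vh ^ 3"
  shows "cmod (uh (x + s) (t + s) - uh x t) \<le> K * s"
    and "cmod (vh (y - s) (t + s) - vh y t) \<le> K * s"
proof -
  let ?S = "UNIV \<times> {0..T} :: (real \<times> real) set"
  obtain Du Dv where D: "\<And>p. p \<in> ?S \<Longrightarrow>
        ((\<lambda>q. uh (fst q) (snd q)) has_derivative Du p) (at p within ?S) \<and>
        ((\<lambda>q. vh (fst q) (snd q)) has_derivative Dv p) (at p within ?S) \<and>
        Du p (0, 1) + Du p (1, 0) = fst (nlde_F m \<alpha> \<beta> (uh (fst p) (snd p), vh (fst p) (snd p))) \<and>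
        Dv p (0, 1) - Dv p (1, 0) = snd (nlde_F m \<alpha> \<beta> (uh (fst p) (snd p), vh (fst p) (snd p)))"
    using sol unfolding NLDE_solution_def by blast
  have segment: "(z, t) + r *\<^sub>R (c, 1) \<in> ?S" if "r \<in> {0..s}" for z c r
    using that assms by auto
  have F_bound: "cmod (fst (nlde_F m \<alpha> \<beta> (uh (fst p) (snd p), vh (fst p) (snd p)))) \<le> K \<and>
      cmod (snd (nlde_F m \<alpha> \<beta> (uh (fst p) (snd p), vh (fst p) (snd p)))) \<le> K" if "p \<in> ?S" for p
  proof -
    have M: "cmod (uh (fst p) (snd p)) + cmod (vh (fst p) (snd p)) + 1 \<le> nlde_M0 T uh vh"
      using that by (intro nlde_M0_upper[OF bdd]) auto
    then have M': "cmod (vh (fst p) (snd p)) + cmod (uh (fst p) (snd p)) + 1 \<le> nlde_M0 T uh vh"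
      by linarith
    show ?thesis
      using norm_nlde_F_fst_le[OF M] norm_nlde_F_fst_le[OF M'] unfolding K_def nlde_F_swap by simp
  qed
  have u_bound: "cmod (Du p (1, 1)) \<le> K" and v_bound: "cmod (Dv p (-1, 1)) \<le> K" if "p \<in> ?S" for p
  proof -
    have "linear (Du p)" "linear (Dv p)"
      using D[OF that] has_derivative_linear by blast+
    then have "Du p (1, 1) = Du p (0, 1) + Du p (1, 0)" "Dv p (-1, 1) = Dv p (0, 1) - Dv p (1, 0)"
      using linear_add[of "Du p" "(0, 1)" "(1, 0)"] linear_diff[of "Dv p" "(0, 1)" "(1, 0)"] by auto
    then show "cmod (Du p (1, 1)) \<le> K" "cmod (Dv p (-1, 1)) \<le> K"
      using D[OF that] F_bound[OF that] by simp_all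
  qed
  define U V where "U q = uh (fst q) (snd q)" and "V q = vh (fst q) (snd q)" for q
  have "(U has_derivative Du q) (at q within ?S)" "(V has_derivative Dv q) (at q within ?S)"
    if "q \<in> ?S" for q
    using D[OF that] unfolding U_def[abs_def] V_def[abs_def] by blast+
  note derivs = this
  have "norm (U ((x, t) + s *\<^sub>R (1, 1)) - U (x, t)) \<le> K * s"
    by (rule norm_diff_along_segment_le[where S = ?S and D = Du])
      (use derivs segment u_bound \<open>0 \<le> s\<close> in auto)
  moreover have "norm (V ((y, t) + s *\<^sub>R (-1, 1)) - V (y, t)) \<le> K * s"
    by (rule norm_diff_along_segment_le[where S = ?S and D = Dv])
      (use derivs segment v_bound \<open>0 \<le> s\<close> in auto)
  ultimately show "cmod (uh (x + s) (t + s) - uh x t) \<le> K * s"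
    and "cmod (vh (y - s) (t + s) - vh y t) \<le> K * s"
    unfolding U_def V_def by simp_all
qed

lemma time_splitting_transport:
  assumes "time_splitting_solution m \<alpha> \<beta> \<tau> u0 v0 ut vt" "0 \<le> s" "s < \<tau>"
  shows "ut (x + s) (real n * \<tau> + s) = ut x (real n * \<tau>)"
    and "vt (y - s) (real n * \<tau> + s) = vt y (real n * \<tau>)"
proof -
  have window: "real n * \<tau> \<le> real n * \<tau> + s \<and> real n * \<tau> + s < (real n + 1) * \<tau>"
    using assms(2,3) by (simp add: algebra_simps)
  have "\<forall>x t. real n * \<tau> \<le> t \<and> t < (real n + 1) * \<tau> \<longrightarrow>
      ut x t = ut (x - (t - real n * \<tau>)) (real n * \<tau>) \<and>
      vt x t = vt (x + (t - real n * \<tau>)) (real n * \<tau>)"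
    using assms(1) unfolding time_splitting_solution_def by blast
  note step = this[rule_format, OF window]
  have "ut (x + s) (real n * \<tau> + s) = ut (x + s - (real n * \<tau> + s - real n * \<tau>)) (real n * \<tau>)"
    by (rule conjunct1[OF step])
  then show "ut (x + s) (real n * \<tau> + s) = ut x (real n * \<tau>)"
    by simp
  have "vt (y - s) (real n * \<tau> + s) = vt (y - s + (real n * \<tau> + s - real n * \<tau>)) (real n * \<tau>)"
    by (rule conjunct2[OF step])
  then show "vt (y - s) (real n * \<tau> + s) = vt y (real n * \<tau>)"
    by simp
qed

lemma time_splitting_local_error:
  assumes sol: "NLDE_solution m \<alpha> \<beta> T uh vh"
    and bdd: "bdd_above ((\<lambda>p. cmod (uh (fst p) (snd p)) + cmod (vh (fst p) (snd p)) + 1) ` (UNIV \<times> {0..T}))"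
    and split: "time_splitting_solution m \<alpha> \<beta> \<tau> u0 v0 ut vt"
    and "(real n + 1) * \<tau> \<le> T" "0 \<le> s" "s < \<tau>"
  defines "L \<equiv> \<bar>m\<bar> + \<bar>\<alpha>\<bar> + 4 * \<bar>\<beta>\<bar>" and "M \<equiv> nlde_M0 T uh vh" and "t \<equiv> real n * \<tau>"
  shows "(cmod (uh (x + s) (t + s) - ut (x + s) (t + s)))\<^sup>2 + (cmod (vh (y - s) (t + s) - vt (y - s) (t + s)))\<^sup>2
    \<le> exp (2 * \<tau>) * ((cmod (uh x t - ut x t))\<^sup>2 + (cmod (vh y t - vt y t))\<^sup>2 + 2 * L\<^sup>2 * M ^ 6 * \<tau>)"
proof -
  have "0 \<le> t" "t + s \<le> T" "t \<le> T"
    using assms(4-6) unfolding t_def by (auto simp: algebra_simps)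
  have "1 \<le> M"
    using nlde_M0_upper[OF bdd \<open>0 \<le> t\<close> \<open>t \<le> T\<close>, of x] norm_ge_zero[of "uh x t"] norm_ge_zero[of "vh x t"]
    unfolding M_def by linarith
  then have K: "0 \<le> L * M ^ 3"
    unfolding L_def by simp
  note exact = NLDE_solution_along_characteristics[OF sol bdd \<open>0 \<le> t\<close> \<open>0 \<le> s\<close> \<open>t + s \<le> T\<close>,
      folded L_def M_def]
  have "(cmod (uh (x + s) (t + s) - ut (x + s) (t + s)))\<^sup>2
      \<le> exp (2 * \<tau>) * ((cmod (uh x t - ut x t))\<^sup>2 + \<tau> * (L * M ^ 3)\<^sup>2)"
    using norm_diff_power2_le_exp[OF exact(1)[of x, unfolded mult.commute[of _ s]] _ _ K, of \<tau> "ut x t"]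
      time_splitting_transport(1)[OF split \<open>0 \<le> s\<close> \<open>s < \<tau>\<close>] \<open>0 \<le> s\<close> \<open>s < \<tau>\<close>
    unfolding t_def by simp
  moreover have "(cmod (vh (y - s) (t + s) - vt (y - s) (t + s)))\<^sup>2
      \<le> exp (2 * \<tau>) * ((cmod (vh y t - vt y t))\<^sup>2 + \<tau> * (L * M ^ 3)\<^sup>2)"
    using norm_diff_power2_le_exp[OF exact(2)[of y, unfolded mult.commute[of _ s]] _ _ K, of \<tau> "vt y t"]
      time_splitting_transport(2)[OF split \<open>0 \<le> s\<close> \<open>s < \<tau>\<close>] \<open>0 \<le> s\<close> \<open>s < \<tau>\<close>
    unfolding t_def by simp
  moreover have "\<tau> * (L * M ^ 3)\<^sup>2 = L\<^sup>2 * M ^ 6 * \<tau>"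
    by (simp add: power_mult_distrib flip: power_mult)
  ultimately show ?thesis
    by (simp add: algebra_simps)
qed

theorem lemma4p1:
  fixes m \<alpha> \<beta> :: real
  assumes "m \<ge> 0"
  shows "\<exists>C0 > 0. \<forall>T uh vh \<tau> u0 v0 ut vt (j::int) (n::nat) s.
     T > 0 \<longrightarrow> NLDE_solution m \<alpha> \<beta> T uh vh \<longrightarrow>
     bdd_above ((\<lambda>p. cmod (uh (fst p) (snd p)) + cmod (vh (fst p) (snd p)) + 1) ` (UNIV \<times> {0..T})) \<longrightarrow>
     \<tau> > 0 \<longrightarrow>
     (\<lambda>k. (cmod (u0 k))\<^sup>2 + (cmod (v0 k))\<^sup>2) summable_on UNIV \<longrightarrow>
     time_splitting_solution m \<alpha> \<beta> \<tau> u0 v0 ut vt \<longrightarrow>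
     (real n + 1) * \<tau> \<le> T \<longrightarrow> 0 \<le> s \<longrightarrow> s < \<tau> \<longrightarrow>
     (cmod (uh (real_of_int j * \<tau> + s) (real n * \<tau> + s) - ut (real_of_int j * \<tau> + s) (real n * \<tau> + s)))\<^sup>2
     + (cmod (vh ((real_of_int j + 2) * \<tau> - s) (real n * \<tau> + s) - vt ((real_of_int j + 2) * \<tau> - s) (real n * \<tau> + s)))\<^sup>2
     \<le> exp (2 * \<tau>) * ((cmod (uh (real_of_int j * \<tau>) (real n * \<tau>) - ut (real_of_int j * \<tau>) (real n * \<tau>)))\<^sup>2
        + (cmod (vh ((real_of_int j + 2) * \<tau>) (real n * \<tau>) - vt ((real_of_int j + 2) * \<tau>) (real n * \<tau>)))\<^sup>2
        + C0 * (nlde_M0 T uh vh) ^ 6 * \<tau>)"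
proof -
  define L where "L = \<bar>m\<bar> + \<bar>\<alpha>\<bar> + 4 * \<bar>\<beta>\<bar>"
  show ?thesis
  proof (intro exI[of _ "2 * L\<^sup>2 + 1"] conjI allI impI)
    show "0 < 2 * L\<^sup>2 + 1"
      by (simp add: add_nonneg_pos)
    fix T uh vh \<tau> u0 v0 ut vt and j :: int and n :: nat and s
    assume "NLDE_solution m \<alpha> \<beta> T uh vh"
      and "bdd_above ((\<lambda>p. cmod (uh (fst p) (snd p)) + cmod (vh (fst p) (snd p)) + 1) ` (UNIV \<times> {0..T}))"
      and "time_splitting_solution m \<alpha> \<beta> \<tau> u0 v0 ut vt"
      and "(real n + 1) * \<tau> \<le> T" "0 \<le> s" "s < \<tau>"
    note error = time_splitting_local_error[OF this, of "real_of_int j * \<tau>" "(real_of_int j + 2) * \<tau>",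
        folded L_def]
    have "2 * L\<^sup>2 * nlde_M0 T uh vh ^ 6 * \<tau> \<le> (2 * L\<^sup>2 + 1) * nlde_M0 T uh vh ^ 6 * \<tau>"
      using \<open>0 \<le> s\<close> \<open>s < \<tau>\<close> by (intro mult_right_mono) (auto simp: zero_le_even_power)
    then show "(cmod (uh (real_of_int j * \<tau> + s) (real n * \<tau> + s) - ut (real_of_int j * \<tau> + s) (real n * \<tau> + s)))\<^sup>2
     + (cmod (vh ((real_of_int j + 2) * \<tau> - s) (real n * \<tau> + s) - vt ((real_of_int j + 2) * \<tau> - s) (real n * \<tau> + s)))\<^sup>2
     \<le> exp (2 * \<tau>) * ((cmod (uh (real_of_int j * \<tau>) (real n * \<tau>) - ut (real_of_int j * \<tau>) (real n * \<tau>)))\<^sup>2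
        + (cmod (vh ((real_of_int j + 2) * \<tau>) (real n * \<tau>) - vt ((real_of_int j + 2) * \<tau>) (real n * \<tau>)))\<^sup>2
        + (2 * L\<^sup>2 + 1) * (nlde_M0 T uh vh) ^ 6 * \<tau>)"
      using error by (smt (verit) exp_gt_zero mult_left_mono)
  qed
qed

end
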